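(* Under the setting below, let $\lambda^\dagger=\inf\{\lambda\ge 0: A(\lambda)\le Q\}$ (with $\inf\emptyset=+\infty$) and $\lambda^*=\min(\pi,\lambda^\dagger)$. Then the primal point $(x_t^*,z_t^* )=W_t(\lambda^* )$ for all $t$, together with $s^*=\max\big(0,\sum_{t=1}^T\tilde h_t(x_t^*,z_t^* )-Q\big)$ and the shadow price $\lambda^*$ as multiplier of (C) (and suitable nonnegative multipliers for the other constraints), satisfies the KKT conditions of (P).
   Context: Fix an integer $T\ge 1$, a data cap $Q>0$ and an overage fee $\pi>0$. For each $t\in\{1,\dots,T\}$ fix reals $d_t\ge 0$, $r_t\ge 0$, $c_t>0$, $p_t>0$, $\theta_t>0$, $\beta_t>0$ and functions $u_t,e_t:[0,\infty)\to\mathbb{R}$ such that: $u_t$ is continuous, increasing and strictly concave, differentiable on $(0,\infty)$, and $u_t':(0,\infty)\to(0,\infty)$ is a strictly decreasing bijection with inverse $u_t'^{-1}$; $e_t$ is increasing, strictly convex and continuously differentiable, and $e_t':[0,\infty)\to[0,\infty)$ is a strictly increasing bijection with inverse $e_t'^{-1}$. For $0\le z\le x\le 1$ let $\tilde f_t(x,z)=\theta_t u_t(x)-\beta_t e_t((x-z)c_t)-p_t c_t z$ and $\tilde h_t(x,z)=d_t x+r_t z$. Problem (P): maximize $\sum_{t=1}^T \tilde f_t(x_t,z_t)-\pi s$ over $x,z\in\mathbb{R}^T$, $s\in\mathbb{R}$, subject to $0\le z_t\le x_t\le 1$ for all $t$, $s\ge 0$, and (C): $s\ge \sum_{t=1}^T\tilde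 h_t(x_t,z_t)-Q$. A KKT point of (P) consists of a feasible $(x^*,z^*,s^* )$ and nonnegative Lagrange multipliers for all constraints satisfying stationarity of the Lagrangian and complementary slackness; $\lambda^*$ denotes the multiplier of (C) (the shadow price of wireless data). For $\lambda\ge 0$ and $\beta>0$ write $a_t(\beta,\lambda)=\frac{1}{c_t}\,e_t'^{-1}\!\Big(\frac{p_tc_t+r_t\lambda}{\beta c_t}\Big)$ and $X_t(\lambda)=p_tc_t+(d_t+r_t)\lambda$. Define the sets (all with $\beta>0$): $\Omega^{I}_t(\lambda)=\{(\beta,\theta):\theta>\frac{\beta c_t e_t'(c_t)+d_t\lambda}{u_t'(1)},\ \beta<\frac{p_tc_t+r_t\lambda}{c_te_t'(c_t)}\}$; $\Omega^{II}_t(\lambda)=\{(\beta,\theta):\theta>\frac{X_t(\lambda)}{u_t'(1)},\ \beta\ge\frac{p_tc_t+r_t\lambda}{c_te_t'(c_t)}\}$; $\Omega^{III}_t(\lambda)=\{(\beta,\theta):\frac{X_t(\lambda)}{u_t'(a_t(\beta,\lambda))}\le\theta\le\frac{X_t(\lambda)}{u_t'(1)}\}$; $\Omega^{IV}_t(\lambda)=\{(\beta,\theta):\theta<\frac{X_t(\lambda)}{u_t'(a_t(\beta,\lambda))},\ \theta\le\frac{\beta c_te_t'(c_t)+d_t\lambda}{u_t'(1)}\}$. Let $z^{II}_t(\lambda)=1-a_t(\beta_t,\lambda)$, $x^{III}_t(\lambda)=u_t'^{-1}(X_t(\lambda)/\theta_t)$, $z^{III}_t(\lambda)=x^{III}_t(\lambda)-a_t(\beta_t,\lambda)$,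 and let $x^{IV}_t(\lambda)\in(0,1]$ be the solution of $\theta_tu_t'(x)-\beta_tc_te_t'(xc_t)=d_t\lambda$. Define $W_t(\lambda)=(1,0)$ if $(\beta_t,\theta_t)\in\Omega^I_t(\lambda)$; $(1,z^{II}_t(\lambda))$ if in $\Omega^{II}_t(\lambda)$; $(x^{III}_t(\lambda),z^{III}_t(\lambda))$ if in $\Omega^{III}_t(\lambda)$; $(x^{IV}_t(\lambda),0)$ if in $\Omega^{IV}_t(\lambda)$. Define the potential data usage $A(\lambda)=\sum_{t=1}^T\tilde h_t(W_t(\lambda))$. *)

theory Defs
  imports "HOL-Analysis.Analysis"
begin

definition strictly_concave_on :: "real set \<Rightarrow> (real \<Rightarrow> real) \<Rightarrow> bool" where
  "strictly_concave_on S f \<longleftrightarrow> (\<forall>x\<in>S. \<forall>y\<in>S. \<forall>a::real. x \<noteq> y \<and> 0 < a \<and> a < 1 \<longrightarrow>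
       f (a * x + (1 - a) * y) > a * f x + (1 - a) * f y)"

definition strictly_convex_on :: "real set \<Rightarrow> (real \<Rightarrow> real) \<Rightarrow> bool" where
  "strictly_convex_on S f \<longleftrightarrow> (\<forall>x\<in>S. \<forall>y\<in>S. \<forall>a::real. x \<noteq> y \<and> 0 < a \<and> a < 1 \<longrightarrow>
       f (a * x + (1 - a) * y) < a * f x + (1 - a) * f y)"

definition a_fn :: "(nat \<Rightarrow> real \<Rightarrow> real) \<Rightarrow> (nat \<Rightarrow> real) \<Rightarrow> (nat \<Rightarrow> real) \<Rightarrow> (nat \<Rightarrow> real)
    \<Rightarrow> nat \<Rightarrow> real \<Rightarrow> real \<Rightarrow> real" where
  "a_fn e' p c r t \<beta> l = (1 / c t) * inv_into {0..} (e' t) ((p t * c t + r t * l) / (\<beta> * c t))"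

definition X_fn :: "(nat \<Rightarrow> real) \<Rightarrow> (nat \<Rightarrow> real) \<Rightarrow> (nat \<Rightarrow> real) \<Rightarrow> (nat \<Rightarrow> real)
    \<Rightarrow> nat \<Rightarrow> real \<Rightarrow> real" where
  "X_fn p c d r t l = p t * c t + (d t + r t) * l"

definition Omega_I where
  "Omega_I u' e' p c d r t l \<beta> \<theta> \<longleftrightarrow> \<beta> > 0 \<and>
     \<theta> > (\<beta> * c t * e' t (c t) + d t * l) / u' t 1 \<and>
     \<beta> < (p t * c t + r t * l) / (c t * e' t (c t))"

definition Omega_II where
  "Omega_II u' e' p c d r t l \<beta> \<theta> \<longleftrightarrow> \<beta> > 0 \<and>
     \<theta> > X_fn p c d r t l / u' t 1 \<and>
     \<beta> \<ge> (p t * c t + r t * l) / (c t * e' t (c t))"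

definition Omega_III where
  "Omega_III u' e' p c d r t l \<beta> \<theta> \<longleftrightarrow> \<beta> > 0 \<and>
     X_fn p c d r t l / u' t (a_fn e' p c r t \<beta> l) \<le> \<theta> \<and>
     \<theta> \<le> X_fn p c d r t l / u' t 1"

definition Omega_IV where
  "Omega_IV u' e' p c d r t l \<beta> \<theta> \<longleftrightarrow> \<beta> > 0 \<and>
     \<theta> < X_fn p c d r t l / u' t (a_fn e' p c r t \<beta> l) \<and>
     \<theta> \<le> (\<beta> * c t * e' t (c t) + d t * l) / u' t 1"

definition xIV where
  "xIV u' e' c d \<theta> \<beta> t l = (THE x. 0 < x \<and> x \<le> 1 \<and>
      \<theta> t * u' t x - \<beta> t * c t * e' t (x * c t) = d t * l)"

definition W where
  "W u' e' p c d r \<theta> \<beta> t l =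
    (if Omega_I u' e' p c d r t l (\<beta> t) (\<theta> t) then (1, 0)
     else if Omega_II u' e' p c d r t l (\<beta> t) (\<theta> t) then (1, 1 - a_fn e' p c r t (\<beta> t) l)
     else if Omega_III u' e' p c d r t l (\<beta> t) (\<theta> t) then
       (let x = inv_into {0<..} (u' t) (X_fn p c d r t l / \<theta> t)
        in (x, x - a_fn e' p c r t (\<beta> t) l))
     else if Omega_IV u' e' p c d r t l (\<beta> t) (\<theta> t) then (xIV u' e' c d \<theta> \<beta> t l, 0)
     else undefined)"

definition h_fn :: "(nat \<Rightarrow> real) \<Rightarrow> (nat \<Rightarrow> real) \<Rightarrow> nat \<Rightarrow> real \<times> real \<Rightarrow> real" where
  "h_fn d r t xz = d t * fst xz + r t * snd xz"

definition A_fn where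
  "A_fn T u' e' p c d r \<theta> \<beta> l = (\<Sum>t=1..T. h_fn d r t (W u' e' p c d r \<theta> \<beta> t l))"

definition lambda_star where
  "lambda_star T Q \<pi> u' e' p c d r \<theta> \<beta> =
    (let S = {l::real. 0 \<le> l \<and> A_fn T u' e' p c d r \<theta> \<beta> l \<le> Q}
     in if S = {} then \<pi> else min \<pi> (Inf S))"

(* Multipliers: mu t for z_t >= 0, nu t for z_t <= x_t, kappa t for x_t <= 1,
   rho for s >= 0, lam for (C).  Lagrangian (maximisation):
   L = sum f~_t - pi s + sum mu_t z_t + sum nu_t (x_t - z_t) + sum kappa_t (1 - x_t) + rho s
       + lam (s - sum h~_t + Q).
   Stationarity written with the partial derivatives of L (u' and e' are the derivatives of u, e). *)
definition is_KKT where
  "is_KKT T Q \<pi> u' e' p c d r \<theta> \<beta> x z s mu nu kappa rho lam \<longleftrightarrow>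
    (\<forall>t\<in>{1..T}. 0 \<le> z t \<and> z t \<le> x t \<and> x t \<le> 1) \<and> 0 \<le> s \<and>
    s \<ge> (\<Sum>t=1..T. h_fn d r t (x t, z t)) - Q \<and>
    (\<forall>t\<in>{1..T}. 0 \<le> mu t \<and> 0 \<le> nu t \<and> 0 \<le> kappa t) \<and> 0 \<le> rho \<and> 0 \<le> lam \<and>
    (\<forall>t\<in>{1..T}.
       \<theta> t * u' t (x t) - \<beta> t * c t * e' t ((x t - z t) * c t) + nu t - kappa t - lam * d t = 0 \<and>
       \<beta> t * c t * e' t ((x t - z t) * c t) - p t * c t + mu t - nu t - lam * r t = 0) \<and>
    - \<pi> + rho + lam = 0 \<and>
    (\<forall>t\<in>{1..T}. mu t * z t = 0 \<and> nu t * (x t - z t) = 0 \<and> kappa t * (1 - x t) = 0) \<and>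
    rho * s = 0 \<and> lam * (s - (\<Sum>t=1..T. h_fn d r t (x t, z t)) + Q) = 0"

end

theory Submission
  imports Defs
begin

text \<open>For a fixed price \<open>\<lambda> \<ge> 0\<close> of wireless data the Lagrangian of (P) decouples into one
  problem per period: maximise \<open>f\<^sub>t - \<lambda> h\<^sub>t\<close> over the triangle \<open>0 \<le> z \<le> x \<le> 1\<close>.
  In each of the four regions \<open>W\<^sub>t(\<lambda>)\<close> satisfies the first-order conditions of that problem with
  \<open>z < x\<close>, so the multiplier of \<open>z \<le> x\<close> vanishes, and by strict concavity it is the unique maximiser.
  A unique maximiser of a jointly continuous objective over a compact set depends continuously on
  the parameter, so the potential data usage \<open>A\<close> is continuous. Hence its sublevel set
  \<open>{\<lambda> \<ge> 0. A(\<lambda>) \<le> Q}\<close> is closed, which gives \<open>A(\<lambda>\<^sup>*) \<le> Q\<close> whenever \<open>\<lambda>\<^sup>* < \<pi>\<close>, while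
  \<open>A > Q\<close> on \<open>[0, \<lambda>\<^sup>*)\<close> gives \<open>A(\<lambda>\<^sup>*) \<ge> Q\<close> whenever \<open>\<lambda>\<^sup>* > 0\<close>. These are exactly the complementary slackness conditions
  for (C) and for \<open>s \<ge> 0\<close>, whose multiplier is \<open>\<pi> - \<lambda>\<^sup>*\<close>.\<close>

lemma strictly_convex_on_imp_convex_on:
  assumes f: "strictly_convex_on S f" and S: "convex S"
  shows "convex_on S f"
proof (rule convex_onI)
  fix t x y :: real assume t: "0 < t" "t < 1" and xy: "x \<in> S" "y \<in> S"
  show "f ((1 - t) *\<^sub>R x + t *\<^sub>R y) \<le> (1 - t) * f x + t * f y"
  proof (cases "x = y")
    case False
    then show ?thesis
      using f[unfolded strictly_convex_on_def, rule_format, of x y "1 - t"] xy t by simp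
  qed (simp add: algebra_simps)
qed (fact S)

lemma strictly_convex_on_imp_above_tangent:
  fixes f :: "real \<Rightarrow> real"
  assumes f: "strictly_convex_on S f" and S: "convex S"
    and f': "(f has_real_derivative D) (at w0 within S)"
    and w0: "w0 \<in> interior S" and w: "w \<in> S" and "w \<noteq> w0"
  shows "f w0 + D * (w - w0) < f w"
proof -
  have w0S: "w0 \<in> S" using w0 interior_subset by blast
  define m where "m = (w0 + w) / 2"
  have "m \<in> S"
    using convexD[OF S w0S w, of "1/2" "1/2"] by (simp add: m_def field_simps)
  then have tangent: "D * (m - w0) \<le> f m - f w0"
    by (rule convex_on_imp_above_tangent[OF strictly_convex_on_imp_convex_on[OF f S]
          convex_connected[OF S] w0 _ f'])
  have "f m < (f w0 + f w) / 2"
    using f[unfolded strictly_convex_on_def, rule_format, of w0 w "1/2"] w0S w \<open>w \<noteq> w0\<close>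
    by (simp add: m_def field_simps)
  then show ?thesis using tangent by (simp add: m_def field_simps)
qed

lemma strictly_concave_on_imp_below_tangent:
  fixes f :: "real \<Rightarrow> real"
  assumes f: "strictly_concave_on S f" and S: "convex S"
    and f': "(f has_real_derivative D) (at w0)"
    and w0: "w0 \<in> interior S" and w: "w \<in> S" and "w \<noteq> w0"
  shows "f w < f w0 + D * (w - w0)"
proof -
  have "strictly_convex_on S (\<lambda>x. - f x)"
    unfolding strictly_convex_on_def
  proof (intro ballI allI impI)
    fix x y a :: real assume "x \<in> S" "y \<in> S" "x \<noteq> y \<and> 0 < a \<and> a < 1"
    then show "- f (a * x + (1 - a) * y) < a * - f x + (1 - a) * - f y"
      using f[unfolded strictly_concave_on_def, rule_format, of x y a] by simp
  qed
  moreover have "((\<lambda>x. - f x) has_real_derivative - D) (at w0 within S)"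
    using DERIV_minus[OF f'] by (rule has_field_derivative_at_within)
  ultimately have "- f w0 + (- D) * (w - w0) < - f w"
    using strictly_convex_on_imp_above_tangent S w0 w \<open>w \<noteq> w0\<close> by blast
  then show ?thesis by simp
qed

lemma continuous_on_unique_maximizer:
  fixes w :: "'a::euclidean_space \<Rightarrow> 'b::euclidean_space" and F :: "'a \<Rightarrow> 'b \<Rightarrow> real"
  assumes K: "compact K"
    and F: "continuous_on (P \<times> K) (\<lambda>q. F (fst q) (snd q))"
    and w_in: "\<And>l. l \<in> P \<Longrightarrow> w l \<in> K"
    and w_max: "\<And>l y. l \<in> P \<Longrightarrow> y \<in> K \<Longrightarrow> y \<noteq> w l \<Longrightarrow> F l y < F l (w l)"
  shows "continuous_on P w"
proof (cases "K = {}")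
  case True
  then have "P = {}" using w_in by blast
  then show ?thesis by simp
next
  case False
  define g where "g y q = F (fst q) (snd q) - F (fst q) y" for y q
  have "continuous_on (P \<times> K) (g y)" if "y \<in> K" for y
  proof -
    have "continuous_on (P \<times> K) ((\<lambda>q. F (fst q) (snd q)) \<circ> (\<lambda>q. (fst q, y)))"
      by (rule continuous_on_compose, intro continuous_intros, rule continuous_on_subset[OF F])
         (use that in auto)
    then have "continuous_on (P \<times> K) (\<lambda>q. F (fst q) y)" by (simp add: o_def)
    then show ?thesis unfolding g_def by (intro continuous_intros F)
  qed
  then have "closedin (top_of_set (P \<times> K)) (\<Inter>y\<in>K. (P \<times> K) \<inter> g y -` {0..})"
    using False by (intro closedin_INT continuous_closedin_preimage) auto
  moreover have "(\<lambda>l. (l, w l)) ` P = (\<Inter>y\<in>K. (P \<times> K) \<inter> g y -` {0..})"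
  proof (intro equalityI subsetI)
    fix q assume "q \<in> (\<lambda>l. (l, w l)) ` P"
    then show "q \<in> (\<Inter>y\<in>K. (P \<times> K) \<inter> g y -` {0..})"
      using w_in w_max by (force simp: g_def less_imp_le)
  next
    fix q assume q: "q \<in> (\<Inter>y\<in>K. (P \<times> K) \<inter> g y -` {0..})"
    obtain l y where l: "l \<in> P" and y: "y \<in> K" and qly: "q = (l, y)" using q False by auto
    have "q \<in> g (w l) -` {0..}" using q w_in[OF l] by blast
    then have "F l (w l) \<le> F l y" by (simp add: qly g_def)
    then have "y = w l" using w_max[OF l y] by force
    then show "q \<in> (\<lambda>l. (l, w l)) ` P" using l qly by auto
  qed
  moreover have "w \<in> P \<rightarrow> K" using w_in by blast
  ultimately show ?thesis using continuous_closed_graph_eq[OF K] by metis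
qed

lemma threshold_complementary_slackness:
  fixes g :: "real \<Rightarrow> real" and Q :: real
  assumes g: "continuous_on {0..} g" and \<pi>: "0 < \<pi>"
  defines "S \<equiv> {l. 0 \<le> l \<and> g l \<le> Q}"
  defines "lam \<equiv> if S = {} then \<pi> else min \<pi> (Inf S)"
  shows "0 \<le> lam" and "lam \<le> \<pi>" and "lam < \<pi> \<Longrightarrow> g lam \<le> Q" and "0 < lam \<Longrightarrow> Q \<le> g lam"
proof -
  have bdd: "bdd_below S" by (auto simp: S_def bdd_below_def)
  have "S = {0..} \<inter> g -` {..Q}" by (auto simp: S_def)
  then have "closed S" using continuous_closed_preimage[OF g] by simp
  then have Inf_S: "Inf S \<in> S" if "S \<noteq> {}"
    using closed_contains_Inf[OF that bdd] by simp
  show "0 \<le> lam" using Inf_S \<pi> by (auto simp: lam_def S_def)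
  show "lam \<le> \<pi>" by (simp add: lam_def)
  show "g lam \<le> Q" if "lam < \<pi>"
    using that Inf_S by (auto simp: lam_def S_def split: if_splits)
  show "Q \<le> g lam" if pos: "0 < lam"
  proof (rule ccontr)
    assume "\<not> Q \<le> g lam"
    then obtain \<delta> where \<delta>: "0 < \<delta>" and near: "\<And>l. 0 \<le> l \<Longrightarrow> dist l lam < \<delta> \<Longrightarrow> g l < Q"
      using g[unfolded continuous_on_iff, rule_format, of lam "Q - g lam"] pos
      by (fastforce simp: dist_real_def)
    define l where "l = max 0 (lam - \<delta> / 2)"
    have "dist l lam < \<delta>" using \<delta> pos by (simp add: l_def dist_real_def max_def)
    then have "l \<in> S" using near[of l] by (simp add: S_def l_def)
    then have "lam \<le> l" using cInf_lower[OF _ bdd] by (fastforce simp: lam_def)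
    then show False using \<delta> pos by (simp add: l_def)
  qed
qed

definition feasible_triangle :: "(real \<times> real) set" where
  "feasible_triangle = {y. 0 \<le> snd y \<and> snd y \<le> fst y \<and> fst y \<le> 1}"

lemma compact_feasible_triangle: "compact feasible_triangle"
proof -
  have "closed feasible_triangle"
    unfolding feasible_triangle_def by (intro closed_Collect_conj closed_Collect_le continuous_intros)
  moreover have "feasible_triangle \<subseteq> cbox (0, 0) (1, 1)"
    by (auto simp: feasible_triangle_def cbox_Pair_iff)
  ultimately show ?thesis using compact_Int_closed[OF compact_cbox] by (metis inf.absorb2)
qed

locale shadow_pricing =
  fixes T :: nat
    and d r c p \<theta> \<beta> :: "nat \<Rightarrow> real"
    and u e u' e' :: "nat \<Rightarrow> real \<Rightarrow> real"
  assumes params: "\<And>t. t \<in> {1..T} \<Longrightarrow>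
       d t \<ge> 0 \<and> r t \<ge> 0 \<and> c t > 0 \<and> p t > 0 \<and> \<theta> t > 0 \<and> \<beta> t > 0"
    and u_cont: "\<And>t. t \<in> {1..T} \<Longrightarrow> continuous_on {0..} (u t)"
    and u_conc: "\<And>t. t \<in> {1..T} \<Longrightarrow> strictly_concave_on {0..} (u t)"
    and u_deriv: "\<And>t x. t \<in> {1..T} \<Longrightarrow> 0 < x \<Longrightarrow> (u t has_real_derivative u' t x) (at x)"
    and u'_bij: "\<And>t. t \<in> {1..T} \<Longrightarrow> bij_betw (u' t) {0<..} {0<..}"
    and u'_decr: "\<And>t x y. t \<in> {1..T} \<Longrightarrow> 0 < x \<Longrightarrow> x < y \<Longrightarrow> u' t y < u' t x"
    and e_conv: "\<And>t. t \<in> {1..T} \<Longrightarrow> strictly_convex_on {0..} (e t)"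
    and e_deriv: "\<And>t x. t \<in> {1..T} \<Longrightarrow> 0 \<le> x \<Longrightarrow>
                    (e t has_real_derivative e' t x) (at x within {0..})"
    and e'_cont: "\<And>t. t \<in> {1..T} \<Longrightarrow> continuous_on {0..} (e' t)"
    and e'_bij: "\<And>t. t \<in> {1..T} \<Longrightarrow> bij_betw (e' t) {0..} {0..}"
    and e'_incr: "\<And>t. t \<in> {1..T} \<Longrightarrow> strict_mono_on {0..} (e' t)"
begin

abbreviation "K t l \<equiv> p t * c t + r t * l"
abbreviation "af t l \<equiv> a_fn e' p c r t (\<beta> t) l"
abbreviation "Wf t l \<equiv> W u' e' p c d r \<theta> \<beta> t l"
abbreviation "Af l \<equiv> A_fn T u' e' p c d r \<theta> \<beta> l"

context
  fixes t assumes t: "t \<in> {1..T}"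
begin

lemma param_pos: "d t \<ge> 0" "r t \<ge> 0" "c t > 0" "p t > 0" "\<theta> t > 0" "\<beta> t > 0"
  using params[OF t] by auto

lemma e'_less_iff: "0 \<le> x \<Longrightarrow> 0 \<le> y \<Longrightarrow> e' t x < e' t y \<longleftrightarrow> x < y"
  using strict_mono_on_less[OF e'_incr[OF t]] by simp

lemma e'_le_iff: "0 \<le> x \<Longrightarrow> 0 \<le> y \<Longrightarrow> e' t x \<le> e' t y \<longleftrightarrow> x \<le> y"
  using strict_mono_on_less_eq[OF e'_incr[OF t]] by simp

lemma e'_inv: "0 \<le> y \<Longrightarrow> 0 \<le> inv_into {0..} (e' t) y \<and> e' t (inv_into {0..} (e' t) y) = y"
  using e'_bij[OF t] inv_into_into[of y "e' t" "{0..}"] f_inv_into_f[of y "e' t" "{0..}"]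
  by (auto simp: bij_betw_def)

lemma e'_zero: "e' t 0 = 0"
proof -
  obtain y where y: "0 \<le> y" "e' t y = 0" using e'_inv[of 0] by auto
  have "0 \<le> e' t 0" using e'_bij[OF t] by (auto simp: bij_betw_def)
  then show ?thesis using e'_le_iff[of 0 y] y by simp
qed

lemma e'_c_pos: "0 < e' t (c t)"
  using e'_less_iff[of 0 "c t"] e'_zero param_pos by simp

lemma u'_pos: "0 < x \<Longrightarrow> 0 < u' t x"
  using u'_bij[OF t] by (auto simp: bij_betw_def)

lemma u'_inv: "0 < y \<Longrightarrow> 0 < inv_into {0<..} (u' t) y \<and> u' t (inv_into {0<..} (u' t) y) = y"
  using u'_bij[OF t] inv_into_into[of y "u' t" "{0<..}"] f_inv_into_f[of y "u' t" "{0<..}"]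
  by (auto simp: bij_betw_def)

lemma u'_le_iff: "0 < x \<Longrightarrow> 0 < y \<Longrightarrow> u' t x \<le> u' t y \<longleftrightarrow> y \<le> x"
  using u'_decr[OF t] by (metis not_le order_le_less)

lemma u'_continuous_on: "continuous_on {0<..} (u' t)"
proof -
  have "(\<lambda>x. - u' t x) ` {0<..} = uminus ` {0<..}"
    using u'_bij[OF t] by (simp add: bij_betw_def image_image[symmetric])
  then have "continuous_on {0<..} (\<lambda>x. - u' t x)"
    by (intro continuous_onI_mono) (auto simp: u'_le_iff)
  then show ?thesis using continuous_on_minus by fastforce
qed

lemma a_pos: "0 \<le> l \<Longrightarrow> 0 < af t l"
  and e'_a: "0 \<le> l \<Longrightarrow> \<beta> t * c t * e' t (af t l * c t) = K t l"
proof -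
  assume l: "0 \<le> l"
  define y where "y = K t l / (\<beta> t * c t)"
  have y: "0 < y" using l param_pos by (simp add: y_def add_pos_nonneg)
  define w where "w = inv_into {0..} (e' t) y"
  have w: "0 \<le> w" "e' t w = y" using e'_inv[of y] y by (auto simp: w_def)
  have "w \<noteq> 0" using w y e'_zero by auto
  have a: "af t l = w / c t" by (simp add: a_fn_def w_def y_def)
  show "0 < af t l" using a w \<open>w \<noteq> 0\<close> param_pos by simp
  show "\<beta> t * c t * e' t (af t l * c t) = K t l" using a w param_pos by (simp add: y_def)
qed

lemma a_le_1_iff:
  assumes l: "0 \<le> l" shows "af t l \<le> 1 \<longleftrightarrow> K t l \<le> \<beta> t * c t * e' t (c t)"
proof -
  have "af t l \<le> 1 \<longleftrightarrow> af t l * c t \<le> c t" using param_pos by simp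
  also have "\<dots> \<longleftrightarrow> e' t (af t l * c t) \<le> e' t (c t)"
    using e'_le_iff a_pos[OF l] param_pos by simp
  also have "\<dots> \<longleftrightarrow> \<beta> t * c t * e' t (af t l * c t) \<le> \<beta> t * c t * e' t (c t)"
    using param_pos by simp
  finally show ?thesis using e'_a[OF l] by simp
qed

lemma X_fn_eq: "X_fn p c d r t l = K t l + d t * l"
  by (simp add: X_fn_def algebra_simps)

lemma Omega_I_iff: "Omega_I u' e' p c d r t l (\<beta> t) (\<theta> t) \<longleftrightarrow>
   \<beta> t * c t * e' t (c t) + d t * l < \<theta> t * u' t 1 \<and> \<beta> t * c t * e' t (c t) < K t l"
  using param_pos e'_c_pos u'_pos[of 1]
  by (simp add: Omega_I_def pos_divide_less_eq pos_less_divide_eq mult.commute mult.left_commute)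

lemma Omega_II_iff: "Omega_II u' e' p c d r t l (\<beta> t) (\<theta> t) \<longleftrightarrow>
   K t l + d t * l < \<theta> t * u' t 1 \<and> K t l \<le> \<beta> t * c t * e' t (c t)"
  using param_pos e'_c_pos u'_pos[of 1]
  by (simp add: Omega_II_def X_fn_eq pos_divide_less_eq pos_divide_le_eq mult.commute mult.left_commute)

lemma Omega_III_iff: "0 \<le> l \<Longrightarrow> Omega_III u' e' p c d r t l (\<beta> t) (\<theta> t) \<longleftrightarrow>
   K t l + d t * l \<le> \<theta> t * u' t (af t l) \<and> \<theta> t * u' t 1 \<le> K t l + d t * l"
  using param_pos u'_pos[of 1] u'_pos[OF a_pos]
  by (simp add: Omega_III_def X_fn_eq pos_divide_le_eq pos_le_divide_eq mult.commute mult.left_commute)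

lemma Omega_IV_iff: "0 \<le> l \<Longrightarrow> Omega_IV u' e' p c d r t l (\<beta> t) (\<theta> t) \<longleftrightarrow>
   \<theta> t * u' t (af t l) < K t l + d t * l \<and> \<theta> t * u' t 1 \<le> \<beta> t * c t * e' t (c t) + d t * l"
  using param_pos u'_pos[of 1] u'_pos[OF a_pos]
  by (simp add: Omega_IV_def X_fn_eq pos_less_divide_eq pos_le_divide_eq mult.commute mult.left_commute)

lemma Omega_cases:
  assumes l: "0 \<le> l"
  shows "Omega_I u' e' p c d r t l (\<beta> t) (\<theta> t) \<or> Omega_II u' e' p c d r t l (\<beta> t) (\<theta> t) \<or>
         Omega_III u' e' p c d r t l (\<beta> t) (\<theta> t) \<or> Omega_IV u' e' p c d r t l (\<beta> t) (\<theta> t)"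
proof (cases "\<beta> t * c t * e' t (c t) < K t l")
  case True
  then have "1 < af t l" using a_le_1_iff[OF l] by linarith
  then have "\<theta> t * u' t (af t l) < \<theta> t * u' t 1" using u'_decr[OF t, of 1] param_pos by simp
  then show ?thesis using True unfolding Omega_I_iff Omega_IV_iff[OF l] by linarith
next
  case False
  then have "af t l \<le> 1" using a_le_1_iff[OF l] by linarith
  then have "\<theta> t * u' t 1 \<le> \<theta> t * u' t (af t l)" using u'_le_iff a_pos[OF l] param_pos by simp
  then show ?thesis
    using False unfolding Omega_II_iff Omega_III_iff[OF l] Omega_IV_iff[OF l] by linarith
qed

definition marginal_gain :: "real \<Rightarrow> real" where
  "marginal_gain x = \<theta> t * u' t x - \<beta> t * c t * e' t (x * c t)"

lemma marginal_gain_strict_decreasing: "0 < x \<Longrightarrow> x < y \<Longrightarrow> marginal_gain y < marginal_gain x"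
proof -
  assume xy: "0 < x" "x < y"
  have "u' t y < u' t x" using u'_decr[OF t xy] .
  moreover have "e' t (x * c t) < e' t (y * c t)" using e'_less_iff xy param_pos by simp
  ultimately show ?thesis using param_pos unfolding marginal_gain_def
    by (simp add: add_strict_mono mult_strict_left_mono diff_strict_mono)
qed

lemma continuous_on_marginal_gain: "continuous_on {0<..} marginal_gain"
proof -
  have "continuous_on {0<..} (\<lambda>x. e' t (x * c t))"
    by (rule continuous_on_compose2[OF e'_cont[OF t]])
       (use param_pos in \<open>auto intro!: continuous_intros\<close>)
  then show ?thesis
    unfolding marginal_gain_def[abs_def] by (intro continuous_intros u'_continuous_on)
qed

lemma marginal_gain_root_exists:
  assumes l: "0 \<le> l" and h: "\<theta> t * u' t 1 \<le> \<beta> t * c t * e' t (c t) + d t * l"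
  shows "\<exists>x. 0 < x \<and> x \<le> 1 \<and> marginal_gain x = d t * l"
proof -
  define M where "M = \<beta> t * c t * e' t (c t) + d t * l + 1"
  have "0 < M / \<theta> t" using param_pos e'_c_pos l by (simp add: M_def add_nonneg_pos)
  then obtain x1 where x1: "0 < x1" "u' t x1 = M / \<theta> t"
    using u'_inv by blast
  have M: "\<theta> t * u' t x1 = M" using x1 param_pos by simp
  have "x1 < 1"
  proof (rule ccontr)
    assume "\<not> x1 < 1"
    then have "u' t x1 \<le> u' t 1" using u'_le_iff[of x1 1] x1(1) by simp
    then have "\<theta> t * u' t x1 \<le> \<theta> t * u' t 1" using param_pos by simp
    then show False using M h by (simp add: M_def)
  qed
  then have "e' t (x1 * c t) < e' t (c t)" using e'_less_iff x1 param_pos by simp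
  then have "\<beta> t * c t * e' t (x1 * c t) < \<beta> t * c t * e' t (c t)" using param_pos by simp
  then have "d t * l \<le> marginal_gain x1" using M by (simp add: marginal_gain_def M_def)
  moreover have "marginal_gain 1 \<le> d t * l" using h by (simp add: marginal_gain_def)
  moreover have "continuous_on {x1..1} marginal_gain"
    by (rule continuous_on_subset[OF continuous_on_marginal_gain]) (use x1(1) in auto)
  ultimately obtain x where "x1 \<le> x" "x \<le> 1" "marginal_gain x = d t * l"
    using IVT2'[of marginal_gain 1 "d t * l" x1] \<open>x1 < 1\<close> by auto
  then show ?thesis using x1(1) by (intro exI[of _ x]) auto
qed

lemma xIV_spec:
  assumes l: "0 \<le> l" and h: "\<theta> t * u' t 1 \<le> \<beta> t * c t * e' t (c t) + d t * l"
  defines "x \<equiv> xIV u' e' c d \<theta> \<beta> t l"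
  shows "0 < x \<and> x \<le> 1 \<and> \<theta> t * u' t x - \<beta> t * c t * e' t (x * c t) = d t * l"
proof -
  obtain x0 where x0: "0 < x0" "x0 \<le> 1" "marginal_gain x0 = d t * l"
    using marginal_gain_root_exists[OF l h] by blast
  have "\<exists>!x. 0 < x \<and> x \<le> 1 \<and> marginal_gain x = d t * l"
  proof (rule ex1I[of _ x0])
    show "y = x0" if "0 < y \<and> y \<le> 1 \<and> marginal_gain y = d t * l" for y
      using that marginal_gain_strict_decreasing[of y x0] marginal_gain_strict_decreasing[of x0 y] x0
      by (cases y x0 rule: linorder_cases) auto
  qed (use x0 in simp)
  then have "0 < x \<and> x \<le> 1 \<and> marginal_gain x = d t * l"
    unfolding x_def xIV_def marginal_gain_def[symmetric] by (rule theI')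
  then show ?thesis by (simp add: marginal_gain_def)
qed

text \<open>Stationarity of the per-period Lagrangian determines the multipliers of \<open>z \<ge> 0\<close> and
  \<open>x \<le> 1\<close>; the multiplier of \<open>z \<le> x\<close> is zero because this constraint is never active at \<open>W\<^sub>t(\<lambda>)\<close>.\<close>

definition mu_mult :: "real \<Rightarrow> real \<Rightarrow> real \<Rightarrow> real" where
  "mu_mult l x z = K t l - \<beta> t * c t * e' t ((x - z) * c t)"

definition kappa_mult :: "real \<Rightarrow> real \<Rightarrow> real \<Rightarrow> real" where
  "kappa_mult l x z = \<theta> t * u' t x - \<beta> t * c t * e' t ((x - z) * c t) - l * d t"

definition period_kkt :: "real \<Rightarrow> real \<Rightarrow> real \<Rightarrow> bool" where
  "period_kkt l x z \<longleftrightarrow> 0 \<le> z \<and> z < x \<and> x \<le> 1 \<and> 0 \<le> mu_mult l x z \<and> 0 \<le> kappa_mult l x z \<and>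
     mu_mult l x z * z = 0 \<and> kappa_mult l x z * (1 - x) = 0"

lemma period_kkt_Omega_I:
  assumes "Omega_I u' e' p c d r t l (\<beta> t) (\<theta> t)"
  shows "period_kkt l 1 0"
  using assms by (simp add: Omega_I_iff period_kkt_def mu_mult_def kappa_mult_def mult.commute)

lemma period_kkt_Omega_II:
  assumes l: "0 \<le> l" and II: "Omega_II u' e' p c d r t l (\<beta> t) (\<theta> t)"
  shows "period_kkt l 1 (1 - af t l)"
proof -
  have "af t l \<le> 1" using II a_le_1_iff[OF l] by (simp add: Omega_II_iff)
  then show ?thesis using II a_pos[OF l] e'_a[OF l]
    by (simp add: Omega_II_iff period_kkt_def mu_mult_def kappa_mult_def mult.commute)
qed

lemma period_kkt_Omega_III:
  assumes l: "0 \<le> l" and III: "Omega_III u' e' p c d r t l (\<beta> t) (\<theta> t)"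
  defines "x \<equiv> inv_into {0<..} (u' t) (X_fn p c d r t l / \<theta> t)"
  shows "period_kkt l x (x - af t l)"
proof -
  have "0 < X_fn p c d r t l / \<theta> t" using l param_pos by (simp add: X_fn_eq add_pos_nonneg)
  then have x: "0 < x" "\<theta> t * u' t x = K t l + d t * l"
    using u'_inv param_pos by (auto simp: x_def X_fn_eq)
  have "K t l + d t * l \<le> \<theta> t * u' t (af t l)" "\<theta> t * u' t 1 \<le> K t l + d t * l"
    using III Omega_III_iff[OF l] by auto
  then have "\<theta> t * u' t x \<le> \<theta> t * u' t (af t l)" "\<theta> t * u' t 1 \<le> \<theta> t * u' t x"
    using x by simp_all
  then have "u' t x \<le> u' t (af t l)" "u' t 1 \<le> u' t x" using param_pos by simp_all
  then have "af t l \<le> x" "x \<le> 1" using u'_le_iff x a_pos[OF l] by auto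
  then show ?thesis using x a_pos[OF l] e'_a[OF l]
    by (simp add: period_kkt_def mu_mult_def kappa_mult_def mult.commute)
qed

lemma period_kkt_Omega_IV:
  assumes l: "0 \<le> l" and IV: "Omega_IV u' e' p c d r t l (\<beta> t) (\<theta> t)"
  defines "x \<equiv> xIV u' e' c d \<theta> \<beta> t l"
  shows "period_kkt l x 0"
proof -
  have a: "0 < af t l" "\<beta> t * c t * e' t (af t l * c t) = K t l" using a_pos[OF l] e'_a[OF l] .
  have h: "\<theta> t * u' t (af t l) < K t l + d t * l"
    "\<theta> t * u' t 1 \<le> \<beta> t * c t * e' t (c t) + d t * l"
    using IV Omega_IV_iff[OF l] by auto
  have x: "0 < x" "x \<le> 1" "\<theta> t * u' t x - \<beta> t * c t * e' t (x * c t) = d t * l"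
    using xIV_spec[OF l h(2)] by (simp_all add: x_def)
  have "x \<le> af t l"
  proof (rule ccontr)
    assume "\<not> x \<le> af t l"
    then have "\<theta> t * u' t x < \<theta> t * u' t (af t l)" using u'_decr[OF t a(1)] param_pos by simp
    moreover have "e' t (af t l * c t) < e' t (x * c t)"
      using \<open>\<not> x \<le> af t l\<close> e'_less_iff a x param_pos by simp
    then have "\<beta> t * c t * e' t (af t l * c t) < \<beta> t * c t * e' t (x * c t)" using param_pos by simp
    ultimately show False using h(1) x(3) a(2) by linarith
  qed
  then have "e' t (x * c t) \<le> e' t (af t l * c t)" using e'_le_iff a(1) x(1) param_pos by simp
  then have "\<beta> t * c t * e' t (x * c t) \<le> K t l"
    using a(2) param_pos by (metis mult_left_mono mult_pos_pos less_imp_le)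
  then show ?thesis using x by (simp add: period_kkt_def mu_mult_def kappa_mult_def mult.commute)
qed

lemma W_period_kkt:
  assumes l: "0 \<le> l"
  shows "period_kkt l (fst (Wf t l)) (snd (Wf t l))"
  using Omega_cases[OF l] period_kkt_Omega_I period_kkt_Omega_II[OF l]
    period_kkt_Omega_III[OF l] period_kkt_Omega_IV[OF l]
  by (auto simp: W_def Let_def)

definition period_lagrangian :: "real \<Rightarrow> real \<times> real \<Rightarrow> real" where
  "period_lagrangian l y = \<theta> t * u t (fst y) - \<beta> t * e t ((fst y - snd y) * c t)
     - p t * c t * snd y - l * h_fn d r t y"

lemma period_lagrangian_diff:
  "period_lagrangian l (x, z) - period_lagrangian l (x0, z0)
     = \<theta> t * (u t x - (u t x0 + u' t x0 * (x - x0)))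
       + \<beta> t * (e t ((x0 - z0) * c t) + e' t ((x0 - z0) * c t) * ((x - z) * c t - (x0 - z0) * c t)
           - e t ((x - z) * c t))
       + kappa_mult l x0 z0 * (x - x0) - mu_mult l x0 z0 * (z - z0)"
  by (simp add: period_lagrangian_def h_fn_def kappa_mult_def mu_mult_def algebra_simps)

lemma period_kkt_imp_strict_max:
  assumes kkt: "period_kkt l x0 z0" and y: "y \<in> feasible_triangle" and ne: "y \<noteq> (x0, z0)"
  shows "period_lagrangian l y < period_lagrangian l (x0, z0)"
proof -
  obtain x z where xz: "y = (x, z)" by fastforce
  have feas: "0 \<le> z" "z \<le> x" "x \<le> 1" using y by (auto simp: xz feasible_triangle_def)
  define \<mu> where "\<mu> = mu_mult l x0 z0"
  define \<kappa> where "\<kappa> = kappa_mult l x0 z0"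
  have k: "0 \<le> z0" "z0 < x0" "x0 \<le> 1" "0 \<le> \<mu>" "0 \<le> \<kappa>" "\<mu> * z0 = 0" "\<kappa> * (1 - x0) = 0"
    using kkt by (auto simp: period_kkt_def \<mu>_def \<kappa>_def)
  let ?w = "(x - z) * c t"
  let ?w' = "(x0 - z0) * c t"
  define u_gap where "u_gap = \<theta> t * (u t x - (u t x0 + u' t x0 * (x - x0)))"
  define e_gap where "e_gap = \<beta> t * (e t ?w' + e' t ?w' * (?w - ?w') - e t ?w)"
  have "\<kappa> * (x - x0) - \<mu> * (z - z0) = \<kappa> * (x - 1) - \<mu> * z + \<kappa> * (1 - x0) + \<mu> * z0"
    by (simp add: algebra_simps)
  also have "\<dots> = \<kappa> * (x - 1) - \<mu> * z" unfolding k(6,7) by simp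
  finally have diff: "period_lagrangian l y - period_lagrangian l (x0, z0)
      = u_gap + e_gap + (\<kappa> * (x - 1) - \<mu> * z)"
    using period_lagrangian_diff[of l x z x0 z0]
    unfolding xz u_gap_def e_gap_def \<mu>_def \<kappa>_def by linarith
  have "0 < x0" using k by linarith
  have u_strict: "u_gap < 0" if "x \<noteq> x0"
    using strictly_concave_on_imp_below_tangent[OF u_conc[OF t] convex_real_interval(1)
        u_deriv[OF t \<open>0 < x0\<close>]] that \<open>0 < x0\<close> feas param_pos
    by (simp add: u_gap_def mult_pos_neg)
  then have "u_gap \<le> 0" by (cases "x = x0") (auto simp: u_gap_def)
  have e_strict: "e_gap < 0" if "x - z \<noteq> x0 - z0"
    using strictly_convex_on_imp_above_tangent[OF e_conv[OF t] convex_real_interval(1)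
        e_deriv[OF t]] that k feas param_pos by (simp add: e_gap_def mult_pos_neg)
  then have "e_gap \<le> 0" by (cases "x - z = x0 - z0") (auto simp: e_gap_def)
  have "\<kappa> * (x - 1) \<le> 0" "0 \<le> \<mu> * z"
    using k(4,5) feas by (simp_all add: mult_nonneg_nonpos)
  moreover have "x \<noteq> x0 \<or> x - z \<noteq> x0 - z0" using ne xz by auto
  ultimately show ?thesis
    using diff u_strict e_strict \<open>u_gap \<le> 0\<close> \<open>e_gap \<le> 0\<close> by linarith
qed

lemma W_continuous_on: "continuous_on {0..} (Wf t)"
proof (rule continuous_on_unique_maximizer[OF compact_feasible_triangle])
  let ?D = "{0..} \<times> feasible_triangle"
  have "continuous_on {0..} (e t)"
    unfolding continuous_on_eq_continuous_within using DERIV_continuous[OF e_deriv[OF t]] by simp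
  moreover have "continuous_on ?D (\<lambda>q. (fst (snd q) - snd (snd q)) * c t)"
    by (intro continuous_intros)
  moreover have "(\<lambda>q. (fst (snd q) - snd (snd q)) * c t) ` ?D \<subseteq> {0..}"
    using param_pos by (auto simp: feasible_triangle_def)
  ultimately have "continuous_on ?D (\<lambda>q. e t ((fst (snd q) - snd (snd q)) * c t))"
    by (rule continuous_on_compose2)
  moreover have "continuous_on ?D (\<lambda>q. u t (fst (snd q)))"
    by (rule continuous_on_compose2[OF u_cont[OF t]], intro continuous_intros)
       (auto simp: feasible_triangle_def)
  ultimately show "continuous_on ?D (\<lambda>q. period_lagrangian (fst q) (snd q))"
    unfolding period_lagrangian_def h_fn_def by (intro continuous_intros)
next
  fix l :: real assume "l \<in> {0..}"
  then have kkt: "period_kkt l (fst (Wf t l)) (snd (Wf t l))" using W_period_kkt by simp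
  then show "Wf t l \<in> feasible_triangle"
    by (simp add: feasible_triangle_def period_kkt_def)
  show "period_lagrangian l y < period_lagrangian l (Wf t l)"
    if "y \<in> feasible_triangle" "y \<noteq> Wf t l" for y
    using period_kkt_imp_strict_max[OF kkt that(1)] that(2) by simp
qed

end

lemma A_continuous_on: "continuous_on {0..} Af"
  unfolding A_fn_def h_fn_def
  by (intro continuous_on_sum continuous_intros continuous_on_fst continuous_on_snd W_continuous_on)
     auto

lemma KKT_at_complementary_price:
  fixes Q \<pi> :: real
  assumes lam: "0 \<le> lam" "lam \<le> \<pi>" "lam < \<pi> \<Longrightarrow> Af lam \<le> Q" "0 < lam \<Longrightarrow> Q \<le> Af lam"
  defines "x \<equiv> \<lambda>t. fst (Wf t lam)" and "z \<equiv> \<lambda>t. snd (Wf t lam)"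
  defines "s \<equiv> max 0 ((\<Sum>t=1..T. h_fn d r t (x t, z t)) - Q)"
  shows "\<exists>mu nu kappa rho. is_KKT T Q \<pi> u' e' p c d r \<theta> \<beta> x z s mu nu kappa rho lam"
proof -
  define mu where "mu t = mu_mult t lam (x t) (z t)" for t
  define kappa where "kappa t = kappa_mult t lam (x t) (z t)" for t
  have kkt: "period_kkt t lam (x t) (z t)" if "t \<in> {1..T}" for t
    using W_period_kkt[OF that lam(1)] by (simp add: x_def z_def)
  have A: "(\<Sum>t=1..T. h_fn d r t (x t, z t)) = Af lam" by (simp add: A_fn_def x_def z_def)
  have "\<forall>t\<in>{1..T}. 0 \<le> z t \<and> z t \<le> x t \<and> x t \<le> 1 \<and> 0 \<le> mu t \<and> 0 \<le> kappa t \<and>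
      mu t * z t = 0 \<and> kappa t * (1 - x t) = 0"
    using kkt by (simp add: period_kkt_def mu_def kappa_def less_imp_le)
  moreover have "\<forall>t\<in>{1..T}.
       \<theta> t * u' t (x t) - \<beta> t * c t * e' t ((x t - z t) * c t) + 0 - kappa t - lam * d t = 0 \<and>
       \<beta> t * c t * e' t ((x t - z t) * c t) - p t * c t + mu t - 0 - lam * r t = 0"
    by (simp add: mu_def kappa_def mu_mult_def kappa_mult_def mult.commute)
  moreover have "(\<pi> - lam) * s = 0"
    using lam(2,3) A by (cases "lam < \<pi>") (simp_all add: s_def)
  moreover have "lam * (s - Af lam + Q) = 0"
    using lam(1,4) A by (cases "0 < lam") (simp_all add: s_def)
  moreover have "0 \<le> s" "Af lam - Q \<le> s" unfolding s_def A by simp_all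
  ultimately have "is_KKT T Q \<pi> u' e' p c d r \<theta> \<beta> x z s mu (\<lambda>t. 0) kappa (\<pi> - lam) lam"
    unfolding is_KKT_def A using lam(1,2) by simp
  then show ?thesis by blast
qed

end

theorem theorem1:
  fixes T :: nat and Q \<pi> :: real
    and d r c p \<theta> \<beta> :: "nat \<Rightarrow> real"
    and u e u' e' :: "nat \<Rightarrow> real \<Rightarrow> real"
  assumes T_pos: "T \<ge> 1" and Q_pos: "Q > 0" and pi_pos: "\<pi> > 0"
    and params: "\<And>t. t \<in> {1..T} \<Longrightarrow>
       d t \<ge> 0 \<and> r t \<ge> 0 \<and> c t > 0 \<and> p t > 0 \<and> \<theta> t > 0 \<and> \<beta> t > 0"
    and u_cont: "\<And>t. t \<in> {1..T} \<Longrightarrow> continuous_on {0..} (u t)"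
    and u_mono: "\<And>t. t \<in> {1..T} \<Longrightarrow> mono_on {0..} (u t)"
    and u_conc: "\<And>t. t \<in> {1..T} \<Longrightarrow> strictly_concave_on {0..} (u t)"
    and u_deriv: "\<And>t x. t \<in> {1..T} \<Longrightarrow> 0 < x \<Longrightarrow> (u t has_real_derivative u' t x) (at x)"
    and u'_bij: "\<And>t. t \<in> {1..T} \<Longrightarrow> bij_betw (u' t) {0<..} {0<..}"
    and u'_decr: "\<And>t x y. t \<in> {1..T} \<Longrightarrow> 0 < x \<Longrightarrow> x < y \<Longrightarrow> u' t y < u' t x"
    and e_mono: "\<And>t. t \<in> {1..T} \<Longrightarrow> mono_on {0..} (e t)"
    and e_conv: "\<And>t. t \<in> {1..T} \<Longrightarrow> strictly_convex_on {0..} (e t)"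
    and e_deriv: "\<And>t x. t \<in> {1..T} \<Longrightarrow> 0 \<le> x \<Longrightarrow>
                    (e t has_real_derivative e' t x) (at x within {0..})"
    and e'_cont: "\<And>t. t \<in> {1..T} \<Longrightarrow> continuous_on {0..} (e' t)"
    and e'_bij: "\<And>t. t \<in> {1..T} \<Longrightarrow> bij_betw (e' t) {0..} {0..}"
    and e'_incr: "\<And>t. t \<in> {1..T} \<Longrightarrow> strict_mono_on {0..} (e' t)"
  shows "let lam = lambda_star T Q \<pi> u' e' p c d r \<theta> \<beta>;
             x = (\<lambda>t. fst (W u' e' p c d r \<theta> \<beta> t lam));
             z = (\<lambda>t. snd (W u' e' p c d r \<theta> \<beta> t lam));
             s = max 0 ((\<Sum>t=1..T. h_fn d r t (x t, z t)) - Q)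
         in \<exists>mu nu kappa rho. is_KKT T Q \<pi> u' e' p c d r \<theta> \<beta> x z s mu nu kappa rho lam"
proof -
  interpret shadow_pricing T d r c p \<theta> \<beta> u e u' e'
    by unfold_locales (fact assms)+
  have "lambda_star T Q \<pi> u' e' p c d r \<theta> \<beta> =
      (if {l. 0 \<le> l \<and> Af l \<le> Q} = {} then \<pi> else min \<pi> (Inf {l. 0 \<le> l \<and> Af l \<le> Q}))"
    by (simp add: lambda_star_def)
  note slackness = threshold_complementary_slackness[OF A_continuous_on pi_pos, of Q, folded this]
  show ?thesis
    unfolding Let_def by (rule KKT_at_complementary_price[OF slackness])
qed

end
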